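(* Let $\alpha_1,\alpha_2,\beta_1,\beta_2,q\in\mathbb Q$ with $\alpha_1+\alpha_2+\beta_1+\beta_2=1$, $\alpha_i+\beta_j\notin\mathbb Z$ for all $i,j$, $q+\alpha_j\notin\mathbb Z$, $q-\beta_j\notin\mathbb Z$, and $q+\alpha_j>0$ ($j=1,2$). Let $F_1(t)=t^{\alpha_1}{}_2F_1\!\left({\alpha_1+\beta_1,\alpha_1+\beta_2\atop1};1-t\right)$ and let $p_0(t)=\sum_id_it^i$, $p_1(t)=\sum_id'_it^i\in\mathbb C[t]$ with $p_1(1)=0$. Put \[ a_n:=\frac{(\alpha_1+q)_n(\alpha_2+q)_n}{(1-\beta_1+q)_n(1-\beta_2+q)_n}\ (n\ge0),\qquad C_m:=\sum_{i\ge-1}\big(d_i-d'_{i+1}(q+m+i)\big)a_{m+i}\ (m\ge1), \] with $d_{-1}:=0$. Then for every $m\ge1$, \[ I_m:=\int_0^1\big(p_0(t)F_1(t)+p_1(t)F_1'(t)\big)t^{q+m-1}\,dt=C_m\,\frac{\Gamma(\alpha_1+q)\Gamma(\alpha_2+q)}{\Gamma(1-\beta_1+q)\Gamma(1-\beta_2+q)}. \] Moreover, if $p_0,p_1$ are not both zero, then $C_m\neq0$ for infinitely many $m\ge1$.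
   Context: $(x)_n=x(x+1)\cdots(x+n-1)$ is the Pochhammer symbol and ${}_2F_1\!\left({a,b\atop c};x\right)=\sum_{n\ge0}\frac{(a)_n(b)_n}{(c)_n n!}x^n$ is Gauss's hypergeometric function (analytically continued); $t^{\alpha_1}$ is the real positive branch on $(0,1)$. *)

theory Defs
  imports "HOL-Analysis.Analysis" "HOL-Computational_Algebra.Polynomial"
begin

text \<open>In the statement it is only
  evaluated at arguments x = 1 - t with t in (0,1), i.e. inside the disc of
  convergence, where the analytic continuation coincides with the series.\<close>
definition hyp2f1 :: "real \<Rightarrow> real \<Rightarrow> real \<Rightarrow> real \<Rightarrow> real" where
  "hyp2f1 a b c x =
     (\<Sum>n. pochhammer a n * pochhammer b n / (pochhammer c n * fact n) * x ^ n)"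

definition F1 :: "real \<Rightarrow> real \<Rightarrow> real \<Rightarrow> real \<Rightarrow> real" where
  "F1 a1 b1 b2 t = t powr a1 * hyp2f1 (a1 + b1) (a1 + b2) 1 (1 - t)"

definition seq_a :: "real \<Rightarrow> real \<Rightarrow> real \<Rightarrow> real \<Rightarrow> real \<Rightarrow> nat \<Rightarrow> real" where
  "seq_a a1 a2 b1 b2 q n =
     pochhammer (a1 + q) n * pochhammer (a2 + q) n /
     (pochhammer (1 - b1 + q) n * pochhammer (1 - b2 + q) n)"

text \<open>All terms with
  i > max (degree p0) (degree p1) vanish, so the sum is over a finite range.\<close>
definition Cm :: "real \<Rightarrow> real \<Rightarrow> real \<Rightarrow> real \<Rightarrow> real \<Rightarrow> complex poly \<Rightarrow> complex poly \<Rightarrow> nat \<Rightarrow> complex" where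
  "Cm a1 a2 b1 b2 q p0 p1 m =
     (\<Sum>i\<in>{-1..int (max (degree p0) (degree p1))}.
        ((if i < 0 then 0 else coeff p0 (nat i))
          - coeff p1 (nat (i + 1)) * complex_of_real (q + real m + real_of_int i))
        * complex_of_real (seq_a a1 a2 b1 b2 q (nat (int m + i))))"

end

theory Submission
  imports Defs "HOL-Real_Asymp.Real_Asymp" "HOL-Library.Landau_Symbols"
begin

(* Integrating the hypergeometric series termwise against the Beta kernel (dominated convergence)
   expresses the Mellin transform int_0^1 t^(s-1) F(a,b;1;1-t) dt through Gauss's sum F(a,b;s+1;1),
   and Gauss's summation theorem -- obtained from the contiguous relation in c by letting c tend to
   infinity -- turns it into a quotient of Gamma values.  Hence int_0^1 F_1(t) t^(q+n-1) dt is a_n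
   times the Gamma quotient of the statement.  The moments of F_1' follow by integration by parts
   from F_1(0) = 0 and F_1(1) = 1; their boundary terms add up to p_1(1) = 0.  Summing against the
   coefficients of p_0 and p_1 gives the integral formula.

   For the second claim, clearing the denominators of a_(m+j) / a_m shows that C_(m+1) is a nonzero
   multiple of P(q + m) for a fixed polynomial P.  Evaluating P at a root b_j - D of its last factor
   kills all but the leading term, which is nonzero unless some a_i + b_j is an integer; hence
   P is not the zero polynomial and C_(m+1) vanishes for only finitely many m. *)

section \<open>Asymptotics of the hypergeometric coefficients\<close>

text \<open>No hypothesis on \<open>x\<close> is needed: at a pole the sequence is eventually \<open>0 = rGamma x\<close>.\<close>
lemma pochhammer_over_fact_asymptotic:
  fixes x :: real
  shows "(\<lambda>n. pochhammer x n / (fact n * real n powr (x - 1))) \<longlonglongrightarrow> rGamma x"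
proof (rule Lim_transform_eventually)
  have "(\<lambda>n. real n / (x + real n)) \<longlonglongrightarrow> 1"
    by real_asymp
  then show "(\<lambda>n. rGamma_series x n * (real n / (x + real n))) \<longlonglongrightarrow> rGamma x"
    using tendsto_mult[OF rGamma_series_LIMSEQ] by fastforce
  show "\<forall>\<^sub>F n in sequentially. rGamma_series x n * (real n / (x + real n)) =
          pochhammer x n / (fact n * real n powr (x - 1))"
    using eventually_gt_at_top[of "nat \<lceil>\<bar>x\<bar>\<rceil>"]
  proof eventually_elim
    case (elim n)
    then have n: "real n > 0" "x + real n > 0" by linarith+
    then have "exp (x * ln (real n)) = real n powr (x - 1) * real n"
      by (simp add: powr_diff powr_def [of "real n" x])
    then have "rGamma_series x n = pochhammer x n * (x + real n) / (fact n * (real n powr (x - 1) * real n))"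
      by (simp add: rGamma_series_def pochhammer_Suc)
    then show ?case
      using n by simp
  qed
qed

definition hyp2f1_coeff :: "real \<Rightarrow> real \<Rightarrow> real \<Rightarrow> nat \<Rightarrow> real" where
  "hyp2f1_coeff a b c n = pochhammer a n * pochhammer b n / (pochhammer c n * fact n)"

lemma hyp2f1_altdef: "hyp2f1 a b c x = (\<Sum>n. hyp2f1_coeff a b c n * x ^ n)"
  unfolding hyp2f1_def hyp2f1_coeff_def ..

lemma hyp2f1_coeff_asymptotic:
  assumes c: "c \<notin> \<int>\<^sub>\<le>\<^sub>0"
  shows "(\<lambda>n. hyp2f1_coeff a b c n / real n powr (a + b - c - 1)) \<longlonglongrightarrow> rGamma a * rGamma b / rGamma c"
proof (rule Lim_transform_eventually)
  define Q where "Q x n = pochhammer x n / (fact n * real n powr (x - 1))" for x :: real and n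
  show "(\<lambda>n. Q a n * Q b n / Q c n) \<longlonglongrightarrow> rGamma a * rGamma b / rGamma c"
    unfolding Q_def using c
    by (intro tendsto_intros pochhammer_over_fact_asymptotic) (simp add: rGamma_eq_zero_iff)
  show "\<forall>\<^sub>F n in sequentially. Q a n * Q b n / Q c n = hyp2f1_coeff a b c n / real n powr (a + b - c - 1)"
    using eventually_gt_at_top[of "0::nat"]
  proof eventually_elim
    case (elim n)
    have "pochhammer c n \<noteq> 0"
      using c pochhammer_eq_0_imp_nonpos_Int by blast
    moreover have "real n powr (a + b - c - 1) = real n powr (a - 1) * real n powr (b - 1) / real n powr (c - 1)"
      by (simp add: powr_add [symmetric] powr_diff [symmetric] algebra_simps)
    ultimately show ?case
      using elim by (simp add: Q_def hyp2f1_coeff_def field_simps)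
  qed
qed

lemma hyp2f1_coeff_bigo:
  assumes "c \<notin> \<int>\<^sub>\<le>\<^sub>0"
  shows "hyp2f1_coeff a b c \<in> O(\<lambda>n. real n powr (a + b - c - 1))"
proof (rule bigoI_tendsto[OF hyp2f1_coeff_asymptotic[OF assms, of a b]])
  show "\<forall>\<^sub>F n in sequentially. real n powr (a + b - c - 1) \<noteq> 0"
    using eventually_gt_at_top[of "0::nat"] by eventually_elim simp
qed

lemma summable_hyp2f1_coeff:
  assumes "c \<notin> \<int>\<^sub>\<le>\<^sub>0" "a + b < c"
  shows "summable (\<lambda>n. \<bar>hyp2f1_coeff a b c n\<bar>)"
proof (rule summable_comparison_test_bigo)
  show "summable (\<lambda>n. norm (real n powr (a + b - c - 1)))"
    using assms(2) by (simp add: summable_real_powr_iff)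
  show "(\<lambda>n. \<bar>hyp2f1_coeff a b c n\<bar>) \<in> O(\<lambda>n. real n powr (a + b - c - 1))"
    using hyp2f1_coeff_bigo[OF assms(1)] by simp
qed

lemma hyp2f1_coeff_times_index_tendsto_0:
  assumes "c \<notin> \<int>\<^sub>\<le>\<^sub>0" "a + b < c"
  shows "(\<lambda>n. real n * hyp2f1_coeff a b c n) \<longlonglongrightarrow> 0"
proof (rule Lim_transform_eventually)
  have "(\<lambda>n. real n powr (a + b - c)) \<longlonglongrightarrow> 0"
    using assms(2) by (intro tendsto_neg_powr filterlim_real_sequentially) auto
  then show "(\<lambda>n. hyp2f1_coeff a b c n / real n powr (a + b - c - 1) * real n powr (a + b - c)) \<longlonglongrightarrow> 0"
    using tendsto_mult[OF hyp2f1_coeff_asymptotic[OF assms(1)]] by fastforce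
  show "\<forall>\<^sub>F n in sequentially. hyp2f1_coeff a b c n / real n powr (a + b - c - 1) * real n powr (a + b - c) =
          real n * hyp2f1_coeff a b c n"
    using eventually_gt_at_top[of "0::nat"]
    by eventually_elim (simp add: powr_diff)
qed

section \<open>Gauss's summation theorem\<close>

lemma hyp2f1_coeff_0 [simp]: "hyp2f1_coeff a b c 0 = 1"
  by (simp add: hyp2f1_coeff_def)

lemma hyp2f1_coeff_Suc:
  assumes "c > 0"
  shows "hyp2f1_coeff a b c (Suc n) =
           hyp2f1_coeff a b c n * (a + real n) * (b + real n) / ((c + real n) * (real n + 1))"
proof -
  have "pochhammer c n > 0"
    using assms by (rule pochhammer_pos)
  then show ?thesis
    using assms by (simp add: hyp2f1_coeff_def pochhammer_rec' field_simps)
qed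

lemma hyp2f1_coeff_c_plus_1:
  assumes "c > 0"
  shows "hyp2f1_coeff a b (c + 1) n = hyp2f1_coeff a b c n * c / (c + real n)"
proof -
  have "c * pochhammer (c + 1) n = (c + real n) * pochhammer c n"
    by (metis pochhammer_rec pochhammer_rec')
  then have "pochhammer (c + 1) n = (c + real n) * pochhammer c n / c"
    using assms by (simp add: eq_divide_eq ac_simps)
  moreover have "pochhammer c n > 0" "c + real n > 0"
    using assms by (simp_all add: pochhammer_pos)
  ultimately show ?thesis
    using assms by (simp add: hyp2f1_coeff_def)
qed

text \<open>Gauss's contiguous relation between \<open>F(a,b;c;1)\<close> and \<open>F(a,b;c+1;1)\<close>, termwise up to a
  telescoping difference.\<close>
lemma hyp2f1_coeff_contiguous:
  assumes c: "c > 0"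
  shows "c * (c - a - b) * hyp2f1_coeff a b c n - (c - a) * (c - b) * hyp2f1_coeff a b (c + 1) n
      = c * real n * hyp2f1_coeff a b c n - c * real (Suc n) * hyp2f1_coeff a b c (Suc n)"
proof -
  have Suc: "real (Suc n) * hyp2f1_coeff a b c (Suc n) =
               hyp2f1_coeff a b c n * (a + real n) * (b + real n) / (c + real n)"
    unfolding hyp2f1_coeff_Suc[OF c] of_nat_Suc by (simp add: ac_simps)
  have "c + real n \<noteq> 0"
    using c by simp
  then show ?thesis
    unfolding mult.assoc[of c "real (Suc n)"] Suc hyp2f1_coeff_c_plus_1[OF c]
    by (simp add: field_simps)
qed

lemma gauss_sum_contiguous:
  assumes c: "c > 0" and cab: "a + b < c"
  shows "c * (c - a - b) * (\<Sum>n. hyp2f1_coeff a b c n) =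
         (c - a) * (c - b) * (\<Sum>n. hyp2f1_coeff a b (c + 1) n)"
proof -
  let ?A = "hyp2f1_coeff a b c" and ?B = "hyp2f1_coeff a b (c + 1)"
  have "c \<notin> \<int>\<^sub>\<le>\<^sub>0" "c + 1 \<notin> \<int>\<^sub>\<le>\<^sub>0"
    using c by auto
  then have "summable ?A" "summable ?B"
    using cab summable_hyp2f1_coeff[of c a b] summable_hyp2f1_coeff[of "c + 1" a b]
    by (auto intro: summable_rabs_cancel)
  then have "(\<lambda>n. c * (c - a - b) * ?A n - (c - a) * (c - b) * ?B n) sums
               (c * (c - a - b) * suminf ?A - (c - a) * (c - b) * suminf ?B)"
    by (intro sums_diff sums_mult summable_sums)
  moreover have "(\<lambda>n. c * (c - a - b) * ?A n - (c - a) * (c - b) * ?B n) sums 0"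
  proof -
    have "(\<lambda>N. - (c * (real N * ?A N))) \<longlonglongrightarrow> - (c * 0)"
      using c cab by (intro tendsto_intros hyp2f1_coeff_times_index_tendsto_0) auto
    moreover have "(\<Sum>n<N. c * (c - a - b) * ?A n - (c - a) * (c - b) * ?B n) = - (c * (real N * ?A N))"
      for N
      unfolding hyp2f1_coeff_contiguous[OF c]
      by (subst sum_lessThan_telescope'[where f = "\<lambda>n. c * real n * ?A n"]) simp
    ultimately show ?thesis
      unfolding sums_def by simp
  qed
  ultimately show ?thesis
    using sums_unique2 by fastforce
qed

lemma gauss_sum_c_plus:
  assumes c: "c > 0" and cab: "a + b < c"
  shows "(\<Sum>n. hyp2f1_coeff a b c n) =
           pochhammer (c - a) k * pochhammer (c - b) k / (pochhammer c k * pochhammer (c - a - b) k)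
           * (\<Sum>n. hyp2f1_coeff a b (c + real k) n)"
proof (induction k)
  case (Suc k)
  have ck: "c + real k > 0" "c + real k - a - b > 0"
    using c cab by auto
  then have nz: "c + real k \<noteq> 0" "c + real k - a - b \<noteq> 0"
    by auto
  have "(c + real k) * (c + real k - a - b) * (\<Sum>n. hyp2f1_coeff a b (c + real k) n) =
          (c + real k - a) * (c + real k - b) * (\<Sum>n. hyp2f1_coeff a b (c + real (Suc k)) n)"
    using gauss_sum_contiguous[of "c + real k" a b] ck by (simp add: ac_simps)
  then have "(\<Sum>n. hyp2f1_coeff a b (c + real k) n) =
          (c + real k - a) * (c + real k - b) / ((c + real k) * (c + real k - a - b))
          * (\<Sum>n. hyp2f1_coeff a b (c + real (Suc k)) n)"
    using nz by (simp add: eq_divide_eq ac_simps)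
  moreover have "pochhammer c k > 0" "pochhammer (c - a - b) k > 0"
    using c cab by (auto intro: pochhammer_pos)
  ultimately show ?case
    using ck by (simp add: Suc pochhammer_Suc field_simps)
qed simp

lemma pochhammer_ratio_tendsto:
  fixes a b c d :: real
  assumes c: "c \<notin> \<int>\<^sub>\<le>\<^sub>0" and d: "d \<notin> \<int>\<^sub>\<le>\<^sub>0" and abcd: "a + b = c + d"
  shows "(\<lambda>k. pochhammer a k * pochhammer b k / (pochhammer c k * pochhammer d k))
           \<longlonglongrightarrow> Gamma c * Gamma d / (Gamma a * Gamma b)"
proof -
  define Q where "Q x k = pochhammer x k / (fact k * real k powr (x - 1))" for x :: real and k
  have "(\<lambda>k. Q a k * Q b k / (Q c k * Q d k)) \<longlonglongrightarrow> rGamma a * rGamma b / (rGamma c * rGamma d)"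
    unfolding Q_def using c d
    by (intro tendsto_intros pochhammer_over_fact_asymptotic) (simp add: rGamma_eq_zero_iff)
  moreover have "\<forall>\<^sub>F k in sequentially. Q a k * Q b k / (Q c k * Q d k) =
                   pochhammer a k * pochhammer b k / (pochhammer c k * pochhammer d k)"
    using eventually_gt_at_top[of "0::nat"]
  proof eventually_elim
    case (elim k)
    have "real k powr (a - 1) * real k powr (b - 1) = real k powr (c - 1) * real k powr (d - 1)"
      using abcd by (simp add: powr_add [symmetric] algebra_simps)
    moreover have "pochhammer c k \<noteq> 0" "pochhammer d k \<noteq> 0"
      using c d pochhammer_eq_0_imp_nonpos_Int by blast+
    ultimately show ?case
      using elim by (simp add: Q_def field_simps)
  qed
  ultimately have "(\<lambda>k. pochhammer a k * pochhammer b k / (pochhammer c k * pochhammer d k))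
                     \<longlonglongrightarrow> rGamma a * rGamma b / (rGamma c * rGamma d)"
    by (rule Lim_transform_eventually)
  then show ?thesis
    by (simp add: rGamma_inverse_Gamma divide_inverse mult_ac)
qed

lemma pochhammer_ratio_le:
  fixes c :: real
  assumes "c > 0" "n \<ge> 1"
  shows "pochhammer c n / pochhammer (c + real k) n \<le> c / (c + real k)"
  using assms(2)
proof (induction n rule: dec_induct)
  case (step n)
  have "pochhammer c n > 0" "pochhammer (c + real k) n > 0"
    using assms(1) by (auto intro: pochhammer_pos)
  have "pochhammer c (Suc n) / pochhammer (c + real k) (Suc n) =
          pochhammer c n / pochhammer (c + real k) n * ((c + real n) / (c + real k + real n))"
    by (simp add: pochhammer_Suc)
  also have "\<dots> \<le> pochhammer c n / pochhammer (c + real k) n * 1"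
    using assms(1) \<open>pochhammer c n > 0\<close> \<open>pochhammer (c + real k) n > 0\<close>
    by (intro mult_left_mono) auto
  finally show ?case
    using step.IH by simp
qed simp

lemma hyp2f1_coeff_c_plus_le:
  assumes "c > 0" "n \<ge> 1"
  shows "\<bar>hyp2f1_coeff a b (c + real k) n\<bar> \<le> c / (c + real k) * \<bar>hyp2f1_coeff a b c n\<bar>"
proof -
  have pos: "pochhammer c n > 0" "pochhammer (c + real k) n > 0"
    using assms(1) by (auto intro: pochhammer_pos)
  then have "\<bar>hyp2f1_coeff a b (c + real k) n\<bar> =
               pochhammer c n / pochhammer (c + real k) n * \<bar>hyp2f1_coeff a b c n\<bar>"
    by (simp add: hyp2f1_coeff_def abs_mult abs_divide field_simps)
  also have "\<dots> \<le> c / (c + real k) * \<bar>hyp2f1_coeff a b c n\<bar>"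
    using pochhammer_ratio_le[OF assms] by (rule mult_right_mono) simp
  finally show ?thesis .
qed

lemma hyp2f1_sum_c_plus_tendsto_1:
  assumes c: "c > 0" and cab: "a + b < c"
  shows "(\<lambda>k. \<Sum>n. hyp2f1_coeff a b (c + real k) n) \<longlonglongrightarrow> 1"
proof -
  have lim: "(\<lambda>k. hyp2f1_coeff a b (c + real k) n) \<longlonglongrightarrow> (if n = 0 then 1 else 0)" for n
  proof (cases "n = 0")
    case False
    have "(\<lambda>k. c / (c + real k)) \<longlonglongrightarrow> 0"
      by real_asymp
    then have "(\<lambda>k. c / (c + real k) * \<bar>hyp2f1_coeff a b c n\<bar>) \<longlonglongrightarrow> 0"
      by (rule tendsto_mult_left_zero)
    moreover have "\<forall>\<^sub>F k in sequentially.
                     norm (hyp2f1_coeff a b (c + real k) n) \<le> c / (c + real k) * \<bar>hyp2f1_coeff a b c n\<bar>"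
      using False hyp2f1_coeff_c_plus_le[OF c] by (intro always_eventually allI) simp
    ultimately have "(\<lambda>k. hyp2f1_coeff a b (c + real k) n) \<longlonglongrightarrow> 0"
      by (rule Lim_null_comparison[rotated])
    with False show ?thesis
      by simp
  qed simp
  have bound: "\<bar>hyp2f1_coeff a b (c + real k) n\<bar> \<le> \<bar>hyp2f1_coeff a b c n\<bar>" for k n
  proof (cases "n = 0")
    case False
    then have "\<bar>hyp2f1_coeff a b (c + real k) n\<bar> \<le> c / (c + real k) * \<bar>hyp2f1_coeff a b c n\<bar>"
      by (intro hyp2f1_coeff_c_plus_le c) simp
    also have "\<dots> \<le> \<bar>hyp2f1_coeff a b c n\<bar>"
      using c by (intro mult_left_le_one_le) auto
    finally show ?thesis .
  qed simp
  have "c \<notin> \<int>\<^sub>\<le>\<^sub>0"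
    using c by auto
  then have summable: "summable (\<lambda>n. \<bar>hyp2f1_coeff a b c n\<bar>)"
    using cab by (rule summable_hyp2f1_coeff)
  have dominated: "\<forall>\<^sub>F (n, k) in at_top \<times>\<^sub>F sequentially.
                   norm (hyp2f1_coeff a b (c + real k) n) \<le> \<bar>hyp2f1_coeff a b c n\<bar>"
    by (intro always_eventually allI) (auto simp: bound)
  have "(\<lambda>k. \<Sum>n. hyp2f1_coeff a b (c + real k) n) \<longlonglongrightarrow> (\<Sum>n::nat. if n = 0 then 1 else 0)"
    using tannerys_theorem[where a = "\<lambda>n k. hyp2f1_coeff a b (c + real k) n", OF lim dominated summable]
    by simp
  also have "(\<Sum>n::nat. if n = 0 then 1 else 0) = (1::real)"
    using sums_single[of 0 "\<lambda>_. 1::real"] by (simp add: sums_iff)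
  finally show ?thesis .
qed

text \<open>There is no hypothesis on \<open>c - a\<close> and \<open>c - b\<close>: at a pole Isabelle's \<open>Gamma\<close> is \<open>0\<close>, so the
  right-hand side is \<open>0\<close>, and so is the sum.\<close>
theorem gauss_summation:
  assumes c: "c > 0" and cab: "a + b < c"
  shows "(\<Sum>n. hyp2f1_coeff a b c n) = Gamma c * Gamma (c - a - b) / (Gamma (c - a) * Gamma (c - b))"
proof (rule LIMSEQ_unique)
  have "c \<notin> \<int>\<^sub>\<le>\<^sub>0" "c - a - b \<notin> \<int>\<^sub>\<le>\<^sub>0"
    using c cab by auto
  then have "(\<lambda>k. pochhammer (c - a) k * pochhammer (c - b) k / (pochhammer c k * pochhammer (c - a - b) k)
                * (\<Sum>n. hyp2f1_coeff a b (c + real k) n))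
             \<longlonglongrightarrow> Gamma c * Gamma (c - a - b) / (Gamma (c - a) * Gamma (c - b)) * 1"
    using c cab by (intro tendsto_mult pochhammer_ratio_tendsto hyp2f1_sum_c_plus_tendsto_1) auto
  then show "(\<lambda>k. \<Sum>n. hyp2f1_coeff a b c n)
               \<longlonglongrightarrow> Gamma c * Gamma (c - a - b) / (Gamma (c - a) * Gamma (c - b))"
    unfolding gauss_sum_c_plus[OF c cab, symmetric] by simp
qed simp

section \<open>The hypergeometric series inside the unit interval\<close>

lemma pochhammer_binomial_sums:
  fixes d x :: real
  assumes "\<bar>x\<bar> < 1"
  shows "(\<lambda>n. pochhammer d n / fact n * x ^ n) sums (1 - x) powr (- d)"
proof -
  have "((- d) gchoose n) * (- x) ^ n = pochhammer d n / fact n * x ^ n" for n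
  proof -
    have "((- d) gchoose n) * (- x) ^ n = ((-1) ^ n * (-1) ^ n) * (pochhammer d n / fact n * x ^ n)"
      by (simp add: gbinomial_pochhammer power_minus[of x])
    also have "(-1::real) ^ n * (-1) ^ n = 1"
      by (simp add: power_mult_distrib [symmetric])
    finally show ?thesis
      by simp
  qed
  then show ?thesis
    using gen_binomial_real[of "- x" "- d"] assms by simp
qed

lemma hyp2f1_coeff_le_pochhammer:
  assumes c: "c \<notin> \<int>\<^sub>\<le>\<^sub>0" and d: "d > 0" "a + b - c < d"
  obtains K where "K > 0" "\<And>n. \<bar>hyp2f1_coeff a b c n\<bar> \<le> K * (pochhammer d n / fact n)"
proof -
  define r where "r n = pochhammer d n / fact n" for n
  have r_pos: "r n > 0" for n
    using d by (simp add: r_def pochhammer_pos)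
  have "(\<lambda>n. hyp2f1_coeff a b c n / real n powr (a + b - c - 1)
              / (pochhammer d n / (fact n * real n powr (d - 1))) * real n powr (a + b - c - d))
          \<longlonglongrightarrow> rGamma a * rGamma b / rGamma c / rGamma d * 0"
    using c d by (intro tendsto_intros hyp2f1_coeff_asymptotic pochhammer_over_fact_asymptotic
                   tendsto_neg_powr filterlim_real_sequentially) (auto simp: rGamma_eq_zero_iff)
  moreover have "\<forall>\<^sub>F n in sequentially.
       hyp2f1_coeff a b c n / real n powr (a + b - c - 1)
         / (pochhammer d n / (fact n * real n powr (d - 1))) * real n powr (a + b - c - d)
       = hyp2f1_coeff a b c n / r n"
    using eventually_gt_at_top[of "0::nat"]
  proof eventually_elim
    case (elim n)
    have "real n powr (a + b - c - d) = real n powr (a + b - c - 1) / real n powr (d - 1)"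
      by (simp add: powr_diff [symmetric] algebra_simps)
    then show ?case
      using elim r_pos[of n] by (simp add: r_def field_simps)
  qed
  ultimately have "(\<lambda>n. hyp2f1_coeff a b c n / r n) \<longlonglongrightarrow> 0"
    by (simp add: Lim_transform_eventually)
  then have "Bseq (\<lambda>n. hyp2f1_coeff a b c n / r n)"
    by (rule convergent_imp_Bseq[OF convergentI])
  then obtain K where K: "K > 0" "\<And>n. \<bar>hyp2f1_coeff a b c n / r n\<bar> \<le> K"
    by (auto elim!: BseqE)
  have "\<bar>hyp2f1_coeff a b c n\<bar> \<le> K * r n" for n
    using K(2)[of n] r_pos[of n] by (simp add: abs_of_pos divide_le_eq)
  with K(1) show ?thesis
    using that unfolding r_def by blast
qed

lemma hyp2f1_abs_partial_sums_bound:
  assumes c: "c \<notin> \<int>\<^sub>\<le>\<^sub>0" and d: "d > 0" "a + b - c < d"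
  obtains K where "K > 0"
    and "\<And>x N. \<bar>x\<bar> < 1 \<Longrightarrow> (\<Sum>n<N. \<bar>hyp2f1_coeff a b c n * x ^ n\<bar>) \<le> K * (1 - \<bar>x\<bar>) powr (- d)"
proof -
  obtain K where K: "K > 0" "\<And>n. \<bar>hyp2f1_coeff a b c n\<bar> \<le> K * (pochhammer d n / fact n)"
    using hyp2f1_coeff_le_pochhammer[OF assms] by blast
  have partial: "(\<Sum>n<N. \<bar>hyp2f1_coeff a b c n * x ^ n\<bar>) \<le> K * (1 - \<bar>x\<bar>) powr (- d)"
    if x: "\<bar>x\<bar> < 1" for x N
  proof -
    have sums: "(\<lambda>n. K * (pochhammer d n / fact n * \<bar>x\<bar> ^ n)) sums (K * (1 - \<bar>x\<bar>) powr (- d))"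
      using x by (intro sums_mult pochhammer_binomial_sums) simp
    have "\<bar>hyp2f1_coeff a b c n * x ^ n\<bar> \<le> K * (pochhammer d n / fact n * \<bar>x\<bar> ^ n)" for n
    proof -
      have "\<bar>hyp2f1_coeff a b c n * x ^ n\<bar> = \<bar>hyp2f1_coeff a b c n\<bar> * \<bar>x\<bar> ^ n"
        by (simp add: abs_mult power_abs)
      also have "\<dots> \<le> K * (pochhammer d n / fact n) * \<bar>x\<bar> ^ n"
        by (rule mult_right_mono[OF K(2)]) simp
      finally show ?thesis
        by (simp add: mult.assoc)
    qed
    then have "(\<Sum>n<N. \<bar>hyp2f1_coeff a b c n * x ^ n\<bar>) \<le> (\<Sum>n<N. K * (pochhammer d n / fact n * \<bar>x\<bar> ^ n))"
      by (rule sum_mono)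
    also have "\<dots> \<le> (\<Sum>n. K * (pochhammer d n / fact n * \<bar>x\<bar> ^ n))"
      using d K(1) by (intro sum_le_suminf sums_summable[OF sums])
        (auto intro!: mult_nonneg_nonneg divide_nonneg_nonneg pochhammer_nonneg)
    also have "\<dots> = K * (1 - \<bar>x\<bar>) powr (- d)"
      using sums by (rule sums_unique [symmetric])
    finally show ?thesis .
  qed
  show ?thesis
    using K(1) partial by (rule that)
qed

lemma summable_hyp2f1_series:
  assumes c: "c \<notin> \<int>\<^sub>\<le>\<^sub>0" and x: "\<bar>x\<bar> < 1"
  shows "summable (\<lambda>n. \<bar>hyp2f1_coeff a b c n * x ^ n\<bar>)"
proof -
  have d: "max 1 (a + b - c + 1) > 0" "a + b - c < max 1 (a + b - c + 1)"
    by auto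
  obtain K where K: "\<And>x N. \<bar>x\<bar> < 1 \<Longrightarrow>
      (\<Sum>n<N. \<bar>hyp2f1_coeff a b c n * x ^ n\<bar>) \<le> K * (1 - \<bar>x\<bar>) powr (- max 1 (a + b - c + 1))"
    using hyp2f1_abs_partial_sums_bound[OF c d] by blast
  show ?thesis
  proof (rule bounded_imp_summable)
    show "(\<Sum>k\<le>N. \<bar>hyp2f1_coeff a b c k * x ^ k\<bar>) \<le> K * (1 - \<bar>x\<bar>) powr (- max 1 (a + b - c + 1))" for N
      using K[OF x, of "Suc N"] by (simp only: lessThan_Suc_atMost)
  qed simp
qed

lemma hyp2f1_sums:
  assumes "c \<notin> \<int>\<^sub>\<le>\<^sub>0" "\<bar>x\<bar> < 1"
  shows "(\<lambda>n. hyp2f1_coeff a b c n * x ^ n) sums hyp2f1 a b c x"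
  unfolding hyp2f1_altdef
  by (rule summable_sums, rule summable_rabs_cancel, rule summable_hyp2f1_series[OF assms])

lemma hyp2f1_bound:
  assumes c: "c \<notin> \<int>\<^sub>\<le>\<^sub>0" and d: "d > 0" "a + b - c < d"
  obtains K where "\<And>x. \<bar>x\<bar> < 1 \<Longrightarrow> \<bar>hyp2f1 a b c x\<bar> \<le> K * (1 - \<bar>x\<bar>) powr (- d)"
proof -
  obtain K where K: "\<And>x N. \<bar>x\<bar> < 1 \<Longrightarrow>
      (\<Sum>n<N. \<bar>hyp2f1_coeff a b c n * x ^ n\<bar>) \<le> K * (1 - \<bar>x\<bar>) powr (- d)"
    using hyp2f1_abs_partial_sums_bound[OF assms] by blast
  have "\<bar>hyp2f1 a b c x\<bar> \<le> K * (1 - \<bar>x\<bar>) powr (- d)" if x: "\<bar>x\<bar> < 1" for x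
  proof -
    have "\<bar>hyp2f1 a b c x\<bar> \<le> (\<Sum>n. \<bar>hyp2f1_coeff a b c n * x ^ n\<bar>)"
      unfolding hyp2f1_altdef by (intro summable_rabs summable_hyp2f1_series c x)
    also have "\<dots> \<le> K * (1 - \<bar>x\<bar>) powr (- d)"
      using K[OF x] by (intro suminf_le_const summable_hyp2f1_series c x)
    finally show ?thesis .
  qed
  then show ?thesis
    by (rule that)
qed

lemma hyp2f1_differentiable:
  assumes c: "c \<notin> \<int>\<^sub>\<le>\<^sub>0" and x: "\<bar>x\<bar> < 1"
  shows "hyp2f1 a b c differentiable (at x)"
proof -
  have "((\<lambda>z. \<Sum>n. hyp2f1_coeff a b c n * z ^ n) has_real_derivative
           (\<Sum>n. diffs (hyp2f1_coeff a b c) n * x ^ n)) (at x)"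
  proof (rule termdiffs_strong'[of 1])
    show "summable (\<lambda>n. hyp2f1_coeff a b c n * z ^ n)" if "norm z < 1" for z
      using that by (intro summable_rabs_cancel[OF summable_hyp2f1_series] c) simp
  qed (use x in simp)
  then show ?thesis
    unfolding hyp2f1_altdef [abs_def] real_differentiable_def by blast
qed

section \<open>A Mellin transform of \<open>F(a,b;1;1-t)\<close>\<close>

lemma has_integral_powr_times_power:
  assumes "s > 0"
  shows "((\<lambda>t. t powr (s - 1) * (1 - t) ^ n) has_integral Beta s (real n + 1)) {0..1}"
proof (rule has_integral_spike_finite[OF _ _ has_integral_Beta_real[OF assms, of "real n + 1"], of "{1}"])
  show "t powr (s - 1) * (1 - t) ^ n = t powr (s - 1) * (1 - t) powr (real n + 1 - 1)"
    if "t \<in> {0..1} - {1}" for t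
    using that by (simp add: powr_realpow)
qed auto

lemma Gamma_plus_of_nat:
  fixes z :: real
  assumes "z \<notin> \<int>\<^sub>\<le>\<^sub>0"
  shows "Gamma (z + real n) = pochhammer z n * Gamma z"
  using pochhammer_Gamma[OF assms, of n] assms by (simp add: Gamma_eq_zero_iff)

lemma hyp2f1_coeff_times_Beta:
  assumes s: "s > 0"
  shows "hyp2f1_coeff a b 1 n * Beta s (real n + 1) = hyp2f1_coeff a b (s + 1) n / s"
proof -
  have s': "s \<notin> \<int>\<^sub>\<le>\<^sub>0" "s + 1 \<notin> \<int>\<^sub>\<le>\<^sub>0"
    using s by auto
  have "Gamma (real n + 1) = fact n"
    using Gamma_fact[of n] by (simp add: add.commute)
  moreover have "Gamma (s + (real n + 1)) = Gamma (s + 1) * pochhammer (s + 1) n"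
    using Gamma_plus_of_nat[OF s'(2), of n] by (simp add: add_ac)
  moreover have "Gamma (s + 1) = s * Gamma s"
    using s'(1) by (rule Gamma_plus1)
  moreover have "Gamma s \<noteq> 0" "pochhammer (s + 1) n > 0"
    using s s'(1) by (auto simp: Gamma_eq_zero_iff intro: pochhammer_pos)
  ultimately show ?thesis
    using s by (simp add: Beta_def hyp2f1_coeff_def pochhammer_fact [symmetric] field_simps)
qed

lemma has_integral_hyp2f1_partial_sum_mellin:
  assumes s: "s > 0"
  shows "((\<lambda>t. t powr (s - 1) * (\<Sum>n<N. hyp2f1_coeff a b 1 n * (1 - t) ^ n)) has_integral
           (\<Sum>n<N. hyp2f1_coeff a b (s + 1) n / s)) {0..1}"
proof -
  have "((\<lambda>t. \<Sum>n<N. hyp2f1_coeff a b 1 n * (t powr (s - 1) * (1 - t) ^ n)) has_integral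
          (\<Sum>n<N. hyp2f1_coeff a b 1 n * Beta s (real n + 1))) {0..1}"
    by (intro has_integral_sum finite_lessThan has_integral_mult_right has_integral_powr_times_power s)
  then show ?thesis
    by (simp add: hyp2f1_coeff_times_Beta[OF s] sum_distrib_left mult_ac)
qed

lemma hyp2f1_partial_sum_mellin_bound:
  assumes d: "d > 0" "a + b - 1 < d"
  obtains K where "\<And>N t. t \<in> {0..1} \<Longrightarrow>
    \<bar>t powr (s - 1) * (\<Sum>n<N. hyp2f1_coeff a b 1 n * (1 - t) ^ n)\<bar> \<le> K * t powr (s - 1 - d)"
proof -
  obtain K where K: "\<And>x N. \<bar>x\<bar> < 1 \<Longrightarrow>
      (\<Sum>n<N. \<bar>hyp2f1_coeff a b 1 n * x ^ n\<bar>) \<le> K * (1 - \<bar>x\<bar>) powr (- d)"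
    using hyp2f1_abs_partial_sums_bound[OF one_notin_nonpos_Ints d] by blast
  have "\<bar>t powr (s - 1) * (\<Sum>n<N. hyp2f1_coeff a b 1 n * (1 - t) ^ n)\<bar> \<le> K * t powr (s - 1 - d)"
    if "t \<in> {0..1}" for N t
  proof (cases "t = 0")
    case False
    with that have t: "0 < t" "\<bar>1 - t\<bar> < 1" "1 - \<bar>1 - t\<bar> = t"
      by auto
    have "\<bar>t powr (s - 1) * (\<Sum>n<N. hyp2f1_coeff a b 1 n * (1 - t) ^ n)\<bar>
            \<le> t powr (s - 1) * (\<Sum>n<N. \<bar>hyp2f1_coeff a b 1 n * (1 - t) ^ n\<bar>)"
      unfolding abs_mult[of "t powr (s - 1)"] abs_of_nonneg[OF powr_ge_zero]
      by (rule mult_left_mono[OF sum_abs]) simp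
    also have "\<dots> \<le> t powr (s - 1) * (K * t powr (- d))"
      using K[OF t(2), of N] t by (intro mult_left_mono) auto
    also have "\<dots> = K * t powr (s - 1 - d)"
      by (simp add: powr_add [symmetric])
    finally show ?thesis .
  qed simp
  then show ?thesis
    by (rule that)
qed

theorem has_integral_hyp2f1_mellin:
  assumes s: "s > 0" and sab: "a + b < s + 1"
  shows "((\<lambda>t. t powr (s - 1) * hyp2f1 a b 1 (1 - t)) has_integral
           Gamma s * Gamma (s + 1 - a - b) / (Gamma (s + 1 - a) * Gamma (s + 1 - b))) {0..1}"
proof -
  define d where "d = (max 0 (a + b - 1) + s) / 2"
  have d: "d > 0" "a + b - 1 < d" "d < s"
    using s sab unfolding d_def by auto
  obtain K where K: "\<And>N t. t \<in> {0..1} \<Longrightarrow>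
      \<bar>t powr (s - 1) * (\<Sum>n<N. hyp2f1_coeff a b 1 n * (1 - t) ^ n)\<bar> \<le> K * t powr (s - 1 - d)"
    using hyp2f1_partial_sum_mellin_bound[OF d(1,2), where s = s] by blast
  define f where "f N t = t powr (s - 1) * (\<Sum>n<N. hyp2f1_coeff a b 1 n * (1 - t) ^ n)" for N t
  have partial: "(f N has_integral (\<Sum>n<N. hyp2f1_coeff a b (s + 1) n / s)) {0..1}" for N
    unfolding f_def by (rule has_integral_hyp2f1_partial_sum_mellin[OF s])
  have dominant: "(\<lambda>t. K * t powr (s - 1 - d)) integrable_on {0..1}"
    using d by (intro integrable_on_mult_right integrable_on_powr_from_0) auto
  have dominated: "\<forall>t\<in>{0..1}. norm (f N t) \<le> K * t powr (s - 1 - d)" for N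
    unfolding f_def using K by simp
  have pointwise: "\<forall>t\<in>{0..1}. (\<lambda>N. f N t) \<longlonglongrightarrow> t powr (s - 1) * hyp2f1 a b 1 (1 - t)"
  proof
    fix t :: real
    assume "t \<in> {0..1}"
    show "(\<lambda>N. f N t) \<longlonglongrightarrow> t powr (s - 1) * hyp2f1 a b 1 (1 - t)"
    proof (cases "t = 0")
      case False
      with \<open>t \<in> {0..1}\<close> have "\<bar>1 - t\<bar> < 1"
        by auto
      then show ?thesis
        unfolding f_def using hyp2f1_sums[of 1 "1 - t" a b]
        by (intro tendsto_mult_left) (simp add: sums_def)
    qed (simp add: f_def)
  qed
  have "s + 1 \<notin> \<int>\<^sub>\<le>\<^sub>0"
    using s by auto
  then have "summable (hyp2f1_coeff a b (s + 1))"
    using sab by (intro summable_rabs_cancel[OF summable_hyp2f1_coeff]) auto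
  then have "(\<lambda>n. hyp2f1_coeff a b (s + 1) n / s) sums ((\<Sum>n. hyp2f1_coeff a b (s + 1) n) / s)"
    by (rule sums_divide[OF summable_sums])
  also have "(\<Sum>n. hyp2f1_coeff a b (s + 1) n) / s =
      Gamma (s + 1) * Gamma (s + 1 - a - b) / (Gamma (s + 1 - a) * Gamma (s + 1 - b)) / s"
    using s sab by (subst gauss_summation) auto
  also have "\<dots> = Gamma s * Gamma (s + 1 - a - b) / (Gamma (s + 1 - a) * Gamma (s + 1 - b))"
    using s by (subst Gamma_plus1) auto
  finally show ?thesis
    unfolding sums_def by (rule has_integral_dominated_convergence[OF partial dominant dominated pointwise])
qed

section \<open>The coefficients \<open>C\<^sub>m\<close>\<close>

lemma sum_atMost_vanishing_tail:
  fixes f :: "nat \<Rightarrow> 'a::comm_monoid_add"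
  assumes "\<And>i. B < i \<Longrightarrow> f i = 0" "B \<le> D1" "B \<le> D2"
  shows "(\<Sum>i\<le>D1. f i) = (\<Sum>i\<le>D2. f i)"
proof -
  have "(\<Sum>i\<le>D. f i) = (\<Sum>i\<le>B. f i)" if "B \<le> D" for D
    using that assms(1) by (intro sum.mono_neutral_right) auto
  with assms(2,3) show ?thesis
    by metis
qed

lemma poly_eq_sum_atMost:
  fixes p :: "'a::{comm_semiring_0,semiring_1} poly"
  assumes "degree p \<le> D"
  shows "poly p x = (\<Sum>j\<le>D. coeff p j * x ^ j)"
  unfolding poly_altdef using assms
  by (intro sum_atMost_vanishing_tail[where B = "degree p"]) (auto simp: coeff_eq_0)

lemma poly_of_real_times_powr:
  fixes p :: "complex poly"
  assumes "degree p \<le> D" "t > 0"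
  shows "poly p (of_real t) * of_real (c * t powr e) = (\<Sum>j\<le>D. coeff p j * of_real (c * t powr (e + real j)))"
proof -
  have "poly p (of_real t) * of_real (c * t powr e) = (\<Sum>j\<le>D. coeff p j * (of_real t ^ j * of_real (c * t powr e)))"
    unfolding poly_eq_sum_atMost[OF assms(1)] by (simp add: sum_distrib_right mult.assoc)
  also have "\<dots> = (\<Sum>j\<le>D. coeff p j * of_real (c * t powr (e + real j)))"
    using assms(2) by (simp add: powr_add powr_realpow mult_ac)
  finally show ?thesis .
qed

lemma poly_combination_times_powr:
  fixes p0 p1 :: "complex poly"
  assumes deg: "degree (pCons 0 p0) \<le> D" "degree p1 \<le> D" and t: "t > 0"
  shows "(poly p0 (of_real t) * of_real u + poly p1 (of_real t) * of_real v) * of_real (t powr e)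
           = (\<Sum>j\<le>D. coeff (pCons 0 p0) j * of_real (u * t powr (e - 1 + real j))
                     + coeff p1 j * of_real (v * t powr (e + real j)))"
proof -
  have "(poly p0 (of_real t) * of_real u + poly p1 (of_real t) * of_real v) * of_real (t powr e)
          = poly (pCons 0 p0) (of_real t) * of_real (u * t powr (e - 1))
            + poly p1 (of_real t) * of_real (v * t powr e)"
    using t by (simp add: powr_diff algebra_simps)
  also have "\<dots> = (\<Sum>j\<le>D. coeff (pCons 0 p0) j * of_real (u * t powr (e - 1 + real j))
                     + coeff p1 j * of_real (v * t powr (e + real j)))"
    unfolding poly_of_real_times_powr[OF deg(1) t] poly_of_real_times_powr[OF deg(2) t]
    by (simp only: sum.distrib)
  finally show ?thesis .
qed

text \<open>Shifting the summation index of \<open>C\<^sub>m\<close> by one absorbs \<open>d\<^sub>-\<^sub>1 = 0\<close> into the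
  coefficients of \<open>t p\<^sub>0(t)\<close>.\<close>
lemma Cm_Suc_eq:
  fixes p0 p1 :: "complex poly"
  assumes deg: "degree (pCons 0 p0) \<le> D" "degree p1 \<le> D"
  shows "Cm a1 a2 b1 b2 q p0 p1 (Suc m) =
    (\<Sum>j\<le>D. (coeff (pCons 0 p0) j - coeff p1 j * of_real (q + real (m + j)))
              * of_real (seq_a a1 a2 b1 b2 q (m + j)))"
proof -
  define D0 where "D0 = max (degree p0) (degree p1)"
  define g where "g j = (coeff (pCons 0 p0) j - coeff p1 j * of_real (q + real (m + j)))
                          * complex_of_real (seq_a a1 a2 b1 b2 q (m + j))" for j
  have "Cm a1 a2 b1 b2 q p0 p1 (Suc m) = (\<Sum>j\<le>Suc D0. g j)"
    unfolding Cm_def D0_def [symmetric]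
  proof (rule sum.reindex_bij_witness[where i = "\<lambda>j. int j - 1" and j = "\<lambda>i. nat (i + 1)"])
    fix i :: int
    assume i: "i \<in> {-1..int D0}"
    show "g (nat (i + 1)) =
        ((if i < 0 then 0 else coeff p0 (nat i)) - coeff p1 (nat (i + 1)) * of_real (q + real (Suc m) + of_int i))
          * of_real (seq_a a1 a2 b1 b2 q (nat (int (Suc m) + i)))"
    proof (cases "i = -1")
      case False
      with i have "0 \<le> i"
        by simp
      then obtain n where "i = int n"
        by (rule nonneg_int_cases)
      then show ?thesis
        by (simp add: g_def nat_add_distrib algebra_simps)
    qed (simp add: g_def algebra_simps)
  qed (simp_all add: nat_le_iff)
  also have "\<dots> = (\<Sum>j\<le>D. g j)"
    using deg by (intro sum_atMost_vanishing_tail[where B = "max (degree (pCons 0 p0)) (degree p1)"])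
      (auto simp: g_def coeff_eq_0 D0_def degree_pCons_eq_if)
  finally show ?thesis
    by (simp add: g_def)
qed

lemma common_leading_degree:
  fixes p0 p1 :: "'a::comm_ring_1 poly"
  assumes nonzero: "p0 \<noteq> 0 \<or> p1 \<noteq> 0" and p1_root: "poly p1 1 = 0"
  obtains N where "degree (pCons 0 p0) \<le> Suc N" "degree p1 \<le> Suc N"
    "coeff (pCons 0 p0) (Suc N) \<noteq> 0 \<or> coeff p1 (Suc N) \<noteq> 0"
proof -
  define D where "D = max (degree (pCons 0 p0)) (degree p1)"
  have p1_nonconstant: "degree p1 \<noteq> 0" if "p1 \<noteq> 0"
  proof
    assume "degree p1 = 0"
    then obtain c where "p1 = [:c:]"
      by (rule degree_eq_zeroE)
    with that p1_root show False
      by simp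
  qed
  have lead: "coeff (pCons 0 p0) D \<noteq> 0 \<or> coeff p1 D \<noteq> 0"
  proof (cases "p0 = 0")
    case True
    with nonzero p1_nonconstant show ?thesis
      by (simp add: D_def)
  next
    case False
    then show ?thesis
      by (cases "degree p1 \<le> degree (pCons 0 p0)") (auto simp: D_def max_def)
  qed
  have "D \<noteq> 0"
    using nonzero p1_nonconstant by (auto simp: D_def)
  then obtain N where "D = Suc N"
    using not0_implies_Suc by blast
  with lead show ?thesis
    by (intro that) (auto simp: D_def)
qed

definition shifted_quadratic :: "real \<Rightarrow> real \<Rightarrow> nat \<Rightarrow> complex poly" where
  "shifted_quadratic u v k = [:of_real (u + real k), 1:] * [:of_real (v + real k), 1:]"

lemma poly_shifted_quadratic [simp]:
  "poly (shifted_quadratic u v k) z = (z + of_real u + of_nat k) * (z + of_real v + of_nat k)"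
  by (simp add: shifted_quadratic_def algebra_simps)

section \<open>Moments of \<open>F\<^sub>1\<close> and nonvanishing of \<open>C\<^sub>m\<close>\<close>

locale F1_moments =
  fixes a1 a2 b1 b2 q :: real
  assumes sum_eq_1: "a1 + a2 + b1 + b2 = 1"
    and q_a1_pos: "q + a1 > 0" and q_a2_pos: "q + a2 > 0"
    and q_b1: "1 - b1 + q \<notin> \<int>\<^sub>\<le>\<^sub>0" and q_b2: "1 - b2 + q \<notin> \<int>\<^sub>\<le>\<^sub>0"
begin

abbreviation F :: "real \<Rightarrow> real" where
  "F \<equiv> F1 a1 b1 b2"

abbreviation A :: "nat \<Rightarrow> real" where
  "A \<equiv> seq_a a1 a2 b1 b2 q"

definition gamma_ratio :: real where
  "gamma_ratio = Gamma (a1 + q) * Gamma (a2 + q) / (Gamma (1 - b1 + q) * Gamma (1 - b2 + q))"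

lemma F_differentiable:
  assumes "0 < t" "t < 2"
  shows "F differentiable (at t)"
proof -
  have "(hyp2f1 (a1 + b1) (a1 + b2) 1 \<circ> (\<lambda>t. 1 - t)) differentiable (at t)"
    using assms by (intro differentiable_chain_at hyp2f1_differentiable derivative_intros) auto
  moreover have "(\<lambda>t. t powr a1) differentiable (at t)"
    using has_real_derivative_powr[of t a1] assms by (auto simp: real_differentiable_def)
  ultimately show ?thesis
    unfolding F1_def [abs_def] comp_def by (intro differentiable_mult)
qed

lemma F_0 [simp]: "F 0 = 0"
  by (simp add: F1_def)

lemma F_1 [simp]: "F 1 = 1"
  by (simp add: F1_def hyp2f1_altdef)

lemma F_times_powr_tendsto_0:
  assumes r: "r \<ge> q"
  shows "((\<lambda>t. F t * t powr r) \<longlongrightarrow> 0) (at 0 within {0..1})"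
proof -
  define d where "d = (max 0 (a1 - a2) + (a1 + q)) / 2"
  have d: "d > 0" "(a1 + b1) + (a1 + b2) - 1 < d" "d < a1 + q"
    using q_a1_pos q_a2_pos sum_eq_1 unfolding d_def by auto
  obtain K where K: "\<And>x. \<bar>x\<bar> < 1 \<Longrightarrow> \<bar>hyp2f1 (a1 + b1) (a1 + b2) 1 x\<bar> \<le> K * (1 - \<bar>x\<bar>) powr (- d)"
    using hyp2f1_bound[OF one_notin_nonpos_Ints d(1,2)] by blast
  show ?thesis
  proof (rule Lim_null_comparison)
    have "((\<lambda>t::real. K * t powr (a1 - d + r)) \<longlongrightarrow> K * 0) (at 0 within {0..1})"
      using d r by (intro tendsto_mult tendsto_const tendsto_zero_powrI[OF tendsto_ident_at tendsto_const])
        (auto simp: eventually_at_filter)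
    then show "((\<lambda>t::real. K * t powr (a1 - d + r)) \<longlongrightarrow> 0) (at 0 within {0..1})"
      by simp
    show "\<forall>\<^sub>F t in at 0 within {0..1}. norm (F t * t powr r) \<le> K * t powr (a1 - d + r)"
      unfolding eventually_at_filter
    proof (intro always_eventually allI impI)
      fix t :: real
      assume "t \<noteq> 0" "t \<in> {0..1}"
      then have t: "0 < t" "\<bar>1 - t\<bar> < 1" "1 - \<bar>1 - t\<bar> = t"
        by auto
      have "norm (F t * t powr r) = t powr a1 * \<bar>hyp2f1 (a1 + b1) (a1 + b2) 1 (1 - t)\<bar> * t powr r"
        by (simp add: F1_def abs_mult)
      also have "\<dots> \<le> t powr a1 * (K * t powr (- d)) * t powr r"
        using K[OF t(2)] t(3) by (intro mult_right_mono mult_left_mono) auto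
      also have "\<dots> = K * t powr (a1 - d + r)"
        by (simp add: powr_add [symmetric] mult_ac add_ac)
      finally show "norm (F t * t powr r) \<le> K * t powr (a1 - d + r)" .
    qed
  qed
qed

lemma F_times_powr_continuous:
  assumes "r \<ge> q"
  shows "continuous_on {0..1} (\<lambda>t. F t * t powr r)"
  unfolding continuous_on_eq_continuous_within
proof (intro ballI)
  fix x :: real
  assume "x \<in> {0..1}"
  then consider "x = 0" | "0 < x" "x \<le> 1"
    by fastforce
  then show "continuous (at x within {0..1}) (\<lambda>t. F t * t powr r)"
  proof cases
    case 1
    then show ?thesis
      using F_times_powr_tendsto_0[OF assms] by (simp add: continuous_within)
  next
    case 2
    then have "isCont (\<lambda>t. F t * t powr r) x"
      using F_differentiable[of x] by (intro continuous_intros differentiable_imp_continuous_within) auto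
    then show ?thesis
      by (rule continuous_at_imp_continuous_at_within)
  qed
qed

lemma has_integral_F_moment:
  "((\<lambda>t. F t * t powr (q + real k - 1)) has_integral A k * gamma_ratio) {0..1}"
proof -
  define s where "s = a1 + q + real k"
  have "((\<lambda>t. t powr (s - 1) * hyp2f1 (a1 + b1) (a1 + b2) 1 (1 - t)) has_integral
          Gamma s * Gamma (s + 1 - (a1 + b1) - (a1 + b2)) /
          (Gamma (s + 1 - (a1 + b1)) * Gamma (s + 1 - (a1 + b2)))) {0..1}"
    using q_a1_pos q_a2_pos sum_eq_1 by (intro has_integral_hyp2f1_mellin) (auto simp: s_def)
  moreover have "t powr (s - 1) * hyp2f1 (a1 + b1) (a1 + b2) 1 (1 - t) = F t * t powr (q + real k - 1)" for t
    by (simp add: s_def F1_def powr_add [symmetric] algebra_simps)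
  moreover have "Gamma s * Gamma (s + 1 - (a1 + b1) - (a1 + b2)) /
                   (Gamma (s + 1 - (a1 + b1)) * Gamma (s + 1 - (a1 + b2))) = A k * gamma_ratio"
  proof -
    have e: "s + 1 - (a1 + b1) - (a1 + b2) = a2 + q + real k"
      "s + 1 - (a1 + b1) = 1 - b1 + q + real k" "s + 1 - (a1 + b2) = 1 - b2 + q + real k"
      using sum_eq_1 by (simp_all add: s_def algebra_simps)
    have "a1 + q \<notin> \<int>\<^sub>\<le>\<^sub>0" "a2 + q \<notin> \<int>\<^sub>\<le>\<^sub>0"
      using q_a1_pos q_a2_pos by (auto simp: add.commute)
    then show ?thesis
      unfolding e(1) unfolding e(2,3) unfolding s_def seq_a_def gamma_ratio_def
      unfolding Gamma_plus_of_nat[OF \<open>a1 + q \<notin> \<int>\<^sub>\<le>\<^sub>0\<close>] Gamma_plus_of_nat[OF \<open>a2 + q \<notin> \<int>\<^sub>\<le>\<^sub>0\<close>]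
        Gamma_plus_of_nat[OF q_b1] Gamma_plus_of_nat[OF q_b2]
      by (simp add: times_divide_times_eq ac_simps)
  qed
  ultimately show ?thesis
    by simp
qed

lemma has_integral_deriv_F_moment:
  "((\<lambda>t. deriv F t * t powr (q + real k)) has_integral 1 - (q + real k) * A k * gamma_ratio) {0..1}"
proof -
  define r where "r = q + real k"
  have "((\<lambda>t. deriv F t * t powr r + F t * (r * t powr (r - 1))) has_integral
          F 1 * 1 powr r - F 0 * 0 powr r) {0..1}"
  proof (rule fundamental_theorem_of_calculus_interior)
    show "continuous_on {0..1} (\<lambda>t. F t * t powr r)"
      by (rule F_times_powr_continuous) (simp add: r_def)
    show "((\<lambda>t. F t * t powr r) has_vector_derivative deriv F x * x powr r + F x * (r * x powr (r - 1))) (at x)"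
      if "x \<in> {0<..<1}" for x
    proof -
      have "(F has_real_derivative deriv F x) (at x)"
        using that F_differentiable[of x] by (simp add: DERIV_deriv_iff_real_differentiable)
      then have "((\<lambda>t. F t * t powr r) has_real_derivative
                   deriv F x * x powr r + F x * (r * x powr (r - 1))) (at x)"
        using that by (auto intro!: derivative_eq_intros)
      then show ?thesis
        by (simp add: has_real_derivative_iff_has_vector_derivative)
    qed
  qed simp
  moreover have "((\<lambda>t. r * (F t * t powr (q + real k - 1))) has_integral r * (A k * gamma_ratio)) {0..1}"
    by (intro has_integral_mult_right has_integral_F_moment)
  ultimately have "((\<lambda>t. (deriv F t * t powr r + F t * (r * t powr (r - 1))) - r * (F t * t powr (q + real k - 1)))
      has_integral 1 - r * (A k * gamma_ratio)) {0..1}"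
    by (intro has_integral_diff) simp_all
  then show ?thesis
    by (simp add: r_def algebra_simps)
qed

lemma has_integral_Cm:
  fixes p0 p1 :: "complex poly"
  assumes p1_root: "poly p1 1 = 0" and m: "m \<ge> 1"
  shows "((\<lambda>t. (poly p0 (complex_of_real t) * complex_of_real (F t)
                 + poly p1 (complex_of_real t) * complex_of_real (deriv F t))
                * complex_of_real (t powr (q + real m - 1)))
          has_integral Cm a1 a2 b1 b2 q p0 p1 m * complex_of_real gamma_ratio) {0..1}"
proof -
  obtain n where n: "m = Suc n"
    using m not0_implies_Suc by fastforce
  define D where "D = Suc (max (degree p0) (degree p1))"
  define P0 where "P0 = pCons 0 p0"
  have deg: "degree P0 \<le> D" "degree p1 \<le> D"
    using degree_pCons_le[of 0 p0] by (auto simp: D_def P0_def)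
  let ?u = "coeff P0" and ?v = "coeff p1"
  have moments: "((\<lambda>t. \<Sum>j\<le>D. ?u j * of_real (F t * t powr (q + real n - 1 + real j))
                      + ?v j * of_real (deriv F t * t powr (q + real n + real j)))
          has_integral (\<Sum>j\<le>D. ?u j * of_real (A (n + j) * gamma_ratio)
                      + ?v j * of_real (1 - (q + real (n + j)) * A (n + j) * gamma_ratio))) {0..1}"
    using has_integral_F_moment[of "n + _"] has_integral_deriv_F_moment[of "n + _"]
    by (intro has_integral_sum has_integral_add has_integral_mult_right has_integral_of_real)
      (auto simp: algebra_simps)
  have moment_sum: "(\<Sum>j\<le>D. ?u j * of_real (A (n + j) * gamma_ratio)
                      + ?v j * of_real (1 - (q + real (n + j)) * A (n + j) * gamma_ratio))
      = Cm a1 a2 b1 b2 q p0 p1 (Suc n) * of_real gamma_ratio + poly p1 1"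
    unfolding Cm_Suc_eq[OF deg[unfolded P0_def]] P0_def [symmetric] poly_eq_sum_atMost[OF deg(2)]
    by (simp add: sum_distrib_left sum_distrib_right sum.distrib sum_subtractf algebra_simps)
  show ?thesis
    unfolding n
  proof (rule has_integral_spike_finite[OF _ _ moments[unfolded moment_sum p1_root add_0_right]])
    show "(poly p0 (of_real t) * of_real (F t) + poly p1 (of_real t) * of_real (deriv F t))
            * of_real (t powr (q + real (Suc n) - 1))
          = (\<Sum>j\<le>D. ?u j * of_real (F t * t powr (q + real n - 1 + real j))
                    + ?v j * of_real (deriv F t * t powr (q + real n + real j)))"
      if "t \<in> {0..1} - {0}" for t
      using poly_combination_times_powr[OF deg[unfolded P0_def], of t "F t" "deriv F t" "q + real n"] that
      by (simp add: P0_def)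
  qed simp
qed

text \<open>\<open>U k\<close> and \<open>V k\<close> are the numerator and denominator of \<open>a\<^sub>m\<^sub>+\<^sub>k\<^sub>+\<^sub>1 / a\<^sub>m\<^sub>+\<^sub>k\<close>,
  as polynomials in \<open>y = q + m\<close>.\<close>
abbreviation U :: "nat \<Rightarrow> complex poly" where
  "U \<equiv> shifted_quadratic a1 a2"

abbreviation V :: "nat \<Rightarrow> complex poly" where
  "V \<equiv> shifted_quadratic (1 - b1) (1 - b2)"

lemma pochhammer_q_b_nonzero: "pochhammer (1 - b1 + q) n \<noteq> 0" "pochhammer (1 - b2 + q) n \<noteq> 0"
  using q_b1 q_b2 pochhammer_eq_0_imp_nonpos_Int by blast+

lemma A_nonzero: "A n \<noteq> 0"
proof -
  have "pochhammer (a1 + q) n > 0" "pochhammer (a2 + q) n > 0"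
    using q_a1_pos q_a2_pos by (simp_all add: pochhammer_pos add.commute)
  then show ?thesis
    using pochhammer_q_b_nonzero by (simp add: seq_a_def)
qed

lemma A_Suc:
  "A (Suc n) * ((1 - b1 + q + real n) * (1 - b2 + q + real n)) = A n * ((a1 + q + real n) * (a2 + q + real n))"
proof -
  have "1 - b1 + q + real n \<notin> \<int>\<^sub>\<le>\<^sub>0" "1 - b2 + q + real n \<notin> \<int>\<^sub>\<le>\<^sub>0"
    using q_b1 q_b2 nonpos_Ints_diff_Nats[of _ "real n"] by (force simp: algebra_simps)+
  then have "1 - b1 + q + real n \<noteq> 0" "1 - b2 + q + real n \<noteq> 0"
    by auto
  moreover have cancel: "(P1 * u1) * (P2 * u2) / ((Q1 * v1) * (Q2 * v2)) * (v1 * v2) = P1 * P2 / (Q1 * Q2) * (u1 * u2)"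
    if "Q1 \<noteq> 0" "Q2 \<noteq> 0" "v1 \<noteq> 0" "v2 \<noteq> 0" for P1 P2 Q1 Q2 u1 u2 v1 v2 :: real
    using that by (simp add: field_simps)
  ultimately show ?thesis
    unfolding seq_a_def pochhammer_Suc by (intro cancel pochhammer_q_b_nonzero)
qed

lemma A_shift:
  "of_real (A (m + j)) * poly (\<Prod>k<j. V k) (of_real (q + real m))
     = of_real (A m) * poly (\<Prod>k<j. U k) (of_real (q + real m))"
proof (induction j)
  case (Suc j)
  let ?y = "complex_of_real (q + real m)"
  have "A (Suc (m + j)) * ((q + real m + (1 - b1) + real j) * (q + real m + (1 - b2) + real j))
          = A (m + j) * ((q + real m + a1 + real j) * (q + real m + a2 + real j))"
    using A_Suc[of "m + j"] by (simp add: algebra_simps)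
  then have "complex_of_real (A (Suc (m + j)) * ((q + real m + (1 - b1) + real j) * (q + real m + (1 - b2) + real j)))
          = of_real (A (m + j) * ((q + real m + a1 + real j) * (q + real m + a2 + real j)))"
    by (rule arg_cong)
  then have step: "complex_of_real (A (Suc (m + j))) * poly (V j) ?y = poly (U j) ?y * of_real (A (m + j))"
    by (simp add: mult_ac)
  have "of_real (A (m + Suc j)) * poly (\<Prod>k<Suc j. V k) ?y
          = (of_real (A (Suc (m + j))) * poly (V j) ?y) * poly (\<Prod>k<j. V k) ?y"
    by (simp add: mult_ac)
  also have "\<dots> = poly (U j) ?y * (of_real (A (m + j)) * poly (\<Prod>k<j. V k) ?y)"
    by (simp only: step mult.assoc)
  also have "\<dots> = poly (U j) ?y * (of_real (A m) * poly (\<Prod>k<j. U k) ?y)"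
    by (simp only: Suc.IH)
  also have "\<dots> = of_real (A m) * poly (\<Prod>k<Suc j. U k) ?y"
    by (simp add: mult_ac)
  finally show ?case .
qed simp

definition Cm_poly :: "complex poly \<Rightarrow> complex poly \<Rightarrow> nat \<Rightarrow> complex poly" where
  "Cm_poly p0 p1 D = (\<Sum>j\<le>D. [:coeff (pCons 0 p0) j - coeff p1 j * of_nat j, - coeff p1 j:]
                                * (\<Prod>k<j. U k) * (\<Prod>k\<in>{j..<D}. V k))"

lemma Cm_Suc_times_prod:
  assumes deg: "degree (pCons 0 p0) \<le> D" "degree p1 \<le> D"
  shows "Cm a1 a2 b1 b2 q p0 p1 (Suc m) * poly (\<Prod>k<D. V k) (of_real (q + real m))
           = of_real (A m) * poly (Cm_poly p0 p1 D) (of_real (q + real m))"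
proof -
  let ?y = "complex_of_real (q + real m)"
  let ?e = "\<lambda>j. coeff (pCons 0 p0) j - coeff p1 j * of_real (q + real (m + j))"
  have split: "(\<Prod>k<D. V k) = (\<Prod>k<j. V k) * (\<Prod>k\<in>{j..<D}. V k)" if "j \<le> D" for j
    using prod.atLeastLessThan_concat[of 0 j D V] that by (simp add: lessThan_atLeast0)
  have "Cm a1 a2 b1 b2 q p0 p1 (Suc m) * poly (\<Prod>k<D. V k) ?y
          = (\<Sum>j\<le>D. ?e j * (of_real (A (m + j)) * poly (\<Prod>k<j. V k) ?y) * poly (\<Prod>k\<in>{j..<D}. V k) ?y)"
    unfolding Cm_Suc_eq[OF deg] sum_distrib_right
    by (intro sum.cong refl) (simp add: split mult_ac)
  also have "\<dots> = (\<Sum>j\<le>D. ?e j * (of_real (A m) * poly (\<Prod>k<j. U k) ?y) * poly (\<Prod>k\<in>{j..<D}. V k) ?y)"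
    by (simp only: A_shift)
  also have "\<dots> = of_real (A m) * poly (Cm_poly p0 p1 D) ?y"
    unfolding Cm_poly_def poly_sum sum_distrib_left
    by (intro sum.cong refl) (simp add: algebra_simps)
  finally show ?thesis .
qed

lemma Cm_poly_Suc:
  "Cm_poly p0 p1 (Suc N) = Cm_poly p0 p1 N * V N
     + [:coeff (pCons 0 p0) (Suc N) - coeff p1 (Suc N) * of_nat (Suc N), - coeff p1 (Suc N):]
       * (\<Prod>k<Suc N. U k)"
  unfolding Cm_poly_def sum_distrib_right by (simp add: prod.atLeastLessThan_Suc mult_ac)

lemma poly_prod_U_nonzero:
  assumes "a1 + b \<notin> \<int>" "a2 + b \<notin> \<int>"
  shows "poly (\<Prod>k<L. U k) (of_real (b - real L)) \<noteq> 0"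
proof -
  have "of_real b - of_nat L + of_real a + of_nat k \<noteq> (0::complex)" if "a + b \<notin> \<int>" for a k
  proof
    assume "of_real b - of_nat L + of_real a + of_nat k = (0::complex)"
    then have "complex_of_real (b - real L + a + real k) = 0"
      by simp
    then have "b - real L + a + real k = 0"
      by (simp only: of_real_eq_0_iff)
    then have "a + b = of_int (int L - int k)"
      by simp
    with that show False
      by (metis Ints_of_int)
  qed
  with assms show ?thesis
    by (simp add: poly_prod)
qed

lemma poly_V_root:
  assumes "b = b1 \<or> b = b2"
  shows "poly (V N) (of_real (b - real (Suc N))) = 0"
  using assms by auto

lemma poly_Cm_poly_Suc_at_root:
  assumes "b = b1 \<or> b = b2"
  shows "poly (Cm_poly p0 p1 (Suc N)) (of_real (b - real (Suc N)))
           = (coeff (pCons 0 p0) (Suc N) - coeff p1 (Suc N) * of_real b)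
             * poly (\<Prod>k<Suc N. U k) (of_real (b - real (Suc N)))"
proof -
  let ?y = "complex_of_real (b - real (Suc N))"
  have "poly (V N) ?y = 0"
    by (rule poly_V_root[OF assms])
  then show ?thesis
    unfolding Cm_poly_Suc by (simp add: algebra_simps)
qed

text \<open>Evaluation at the roots \<open>b\<^sub>j - D\<close> of the last factor \<open>V (D - 1)\<close> isolates the leading term;
  when \<open>b\<^sub>1 = b\<^sub>2\<close> the root is double and one factor has to be divided out first.\<close>
lemma Cm_poly_nonzero:
  assumes lead: "coeff (pCons 0 p0) (Suc N) \<noteq> 0 \<or> coeff p1 (Suc N) \<noteq> 0"
    and ab: "a1 + b1 \<notin> \<int>" "a1 + b2 \<notin> \<int>" "a2 + b1 \<notin> \<int>" "a2 + b2 \<notin> \<int>"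
  shows "Cm_poly p0 p1 (Suc N) \<noteq> 0"
proof -
  define c0 where "c0 = coeff (pCons 0 p0) (Suc N)"
  define c1 where "c1 = coeff p1 (Suc N)"
  define UL where "UL = (\<Prod>k<Suc N. U k)"
  have UL_nonzero: "poly UL (of_real (b - real (Suc N))) \<noteq> 0" if "b = b1 \<or> b = b2" for b
  proof -
    have "a1 + b \<notin> \<int>" "a2 + b \<notin> \<int>"
      using that ab by auto
    then show ?thesis
      unfolding UL_def by (rule poly_prod_U_nonzero)
  qed
  show ?thesis
  proof (cases "c0 = c1 * of_real b1 \<and> c0 = c1 * of_real b2")
    case False
    then obtain b where "b = b1 \<or> b = b2" "c0 \<noteq> c1 * of_real b"
      by blast
    then have "poly (Cm_poly p0 p1 (Suc N)) (of_real (b - real (Suc N))) \<noteq> 0"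
      using poly_Cm_poly_Suc_at_root UL_nonzero by (simp add: c0_def c1_def UL_def)
    then show ?thesis
      by auto
  next
    case True
    then have "c1 \<noteq> 0"
      using lead by (auto simp: c0_def c1_def)
    with True have "b1 = b2"
      by (metis mult_left_cancel of_real_eq_iff)
    define X :: "complex poly" where "X = [:- of_real (b1 - real (Suc N)), 1:]"
    have "V N = X * X" "[:c0 - c1 * of_nat (Suc N), - c1:] = smult (- c1) X"
      using True \<open>b1 = b2\<close> by (simp_all add: X_def shifted_quadratic_def algebra_simps)
    then have factor: "Cm_poly p0 p1 (Suc N) = X * (Cm_poly p0 p1 N * X + smult (- c1) UL)"
      unfolding Cm_poly_Suc c0_def [symmetric] c1_def [symmetric] UL_def [symmetric]
      by (simp add: algebra_simps)
    have "poly X (of_real (b1 - real (Suc N))) = 0"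
      by (simp add: X_def)
    then have "poly (Cm_poly p0 p1 N * X + smult (- c1) UL) (of_real (b1 - real (Suc N))) \<noteq> 0"
      using \<open>c1 \<noteq> 0\<close> UL_nonzero[of b1] by simp
    then have "Cm_poly p0 p1 N * X + smult (- c1) UL \<noteq> 0"
      by (metis poly_0)
    moreover have "X \<noteq> 0"
      by (simp add: X_def)
    ultimately show ?thesis
      unfolding factor by simp
  qed
qed

lemma infinite_Cm_nonzero:
  fixes p0 p1 :: "complex poly"
  assumes nonzero: "p0 \<noteq> 0 \<or> p1 \<noteq> 0" and p1_root: "poly p1 1 = 0"
    and ab: "a1 + b1 \<notin> \<int>" "a1 + b2 \<notin> \<int>" "a2 + b1 \<notin> \<int>" "a2 + b2 \<notin> \<int>"
  shows "infinite {m. m \<ge> 1 \<and> Cm a1 a2 b1 b2 q p0 p1 m \<noteq> 0}"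
proof -
  obtain N where deg: "degree (pCons 0 p0) \<le> Suc N" "degree p1 \<le> Suc N"
    and lead: "coeff (pCons 0 p0) (Suc N) \<noteq> 0 \<or> coeff p1 (Suc N) \<noteq> 0"
    using common_leading_degree[OF nonzero p1_root] by blast
  let ?P = "Cm_poly p0 p1 (Suc N)"
  have "finite {y. poly ?P y = 0}"
    using Cm_poly_nonzero[OF lead ab] by (rule poly_roots_finite)
  then have "finite ((\<lambda>m. complex_of_real (q + real m)) -` {y. poly ?P y = 0})"
    by (rule finite_vimageI) (simp add: inj_def)
  moreover have "{m. Cm a1 a2 b1 b2 q p0 p1 (Suc m) = 0} \<subseteq> (\<lambda>m. complex_of_real (q + real m)) -` {y. poly ?P y = 0}"
  proof
    fix m
    assume "m \<in> {m. Cm a1 a2 b1 b2 q p0 p1 (Suc m) = 0}"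
    then have "poly ?P (of_real (q + real m)) = 0"
      using Cm_Suc_times_prod[OF deg, of m] A_nonzero[of m] by simp
    then show "m \<in> (\<lambda>m. complex_of_real (q + real m)) -` {y. poly ?P y = 0}"
      by simp
  qed
  ultimately have "finite {m. Cm a1 a2 b1 b2 q p0 p1 (Suc m) = 0}"
    by (rule finite_subset[rotated])
  then have "infinite {m. Cm a1 a2 b1 b2 q p0 p1 (Suc m) \<noteq> 0}"
    using Diff_infinite_finite[of _ UNIV] by (simp add: set_diff_eq)
  then have "infinite (Suc ` {m. Cm a1 a2 b1 b2 q p0 p1 (Suc m) \<noteq> 0})"
    by (simp add: finite_image_iff)
  moreover have "Suc ` {m. Cm a1 a2 b1 b2 q p0 p1 (Suc m) \<noteq> 0} \<subseteq> {m. m \<ge> 1 \<and> Cm a1 a2 b1 b2 q p0 p1 m \<noteq> 0}"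
    by auto
  ultimately show ?thesis
    by (rule infinite_super[rotated])
qed

end

theorem proposition6p1:
  fixes a1 a2 b1 b2 q :: real and p0 p1 :: "complex poly"
  assumes rat: "a1 \<in> \<rat>" "a2 \<in> \<rat>" "b1 \<in> \<rat>" "b2 \<in> \<rat>" "q \<in> \<rat>"
    and sum1: "a1 + a2 + b1 + b2 = 1"
    and ab: "a1 + b1 \<notin> \<int>" "a1 + b2 \<notin> \<int>" "a2 + b1 \<notin> \<int>" "a2 + b2 \<notin> \<int>"
    and qa: "q + a1 \<notin> \<int>" "q + a2 \<notin> \<int>"
    and qb: "q - b1 \<notin> \<int>" "q - b2 \<notin> \<int>"
    and qpos: "q + a1 > 0" "q + a2 > 0"
    and p1root: "poly p1 1 = 0"
  shows "(\<forall>m::nat. m \<ge> 1 \<longrightarrow>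
           ((\<lambda>t. (poly p0 (complex_of_real t) * complex_of_real (F1 a1 b1 b2 t)
                  + poly p1 (complex_of_real t) * complex_of_real (deriv (F1 a1 b1 b2) t))
                 * complex_of_real (t powr (q + real m - 1)))
            has_integral
              (Cm a1 a2 b1 b2 q p0 p1 m *
               complex_of_real (Gamma (a1 + q) * Gamma (a2 + q) /
                                (Gamma (1 - b1 + q) * Gamma (1 - b2 + q))))) {0..1})
         \<and> ((p0 \<noteq> 0 \<or> p1 \<noteq> 0) \<longrightarrow>
              infinite {m::nat. m \<ge> 1 \<and> Cm a1 a2 b1 b2 q p0 p1 m \<noteq> 0})"
proof -
  have "1 - b + q \<notin> \<int>\<^sub>\<le>\<^sub>0" if "q - b \<notin> \<int>" for b
    using that Ints_diff[OF _ Ints_1, of "1 - b + q"] not_in_Ints_imp_not_in_nonpos_Ints by auto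
  with sum1 qpos qb interpret F1_moments a1 a2 b1 b2 q
    by unfold_locales auto
  show ?thesis
    using has_integral_Cm[OF p1root] infinite_Cm_nonzero[OF _ p1root ab]
    unfolding gamma_ratio_def by blast
qed

end
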